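(* Let $(L,\preceq)$ be a lattice and let $\mathrm{LCon}\,L$ be the set of all local congruences on $L$, ordered by inclusion $\sqsubseteq$. Then $(\mathrm{LCon}\,L,\sqsubseteq)$ is a complete lattice, whose least element is $\delta_\bot=\{(a,a)\mid a\in L\}$ and whose greatest element is $\delta_\top=\{(a,b)\mid a,b\in L\}$.
   Context: A local congruence on a lattice $(L,\preceq)$ is an equivalence relation on $L$ each of whose equivalence classes is a sublattice of $L$ and is convex (if $u,v$ are in the class and $u\preceq w\preceq v$, then $w$ is in the class). For equivalence relations $\rho_1,\rho_2$ on $L$, $\rho_1\sqsubseteq\rho_2$ means that every equivalence class of $\rho_1$ is contained in some equivalence class of $\rho_2$ (equivalently $\rho_1\subseteq\rho_2$ as sets of pairs). *)

theory Defs
  imports Main "HOL-Algebra.Complete_Lattice"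
begin

text \<open>The lattice L is the universe of a type of class lattice, ordered by the
class order. A local congruence is an equivalence relation on L each of whose
classes is a convex sublattice.\<close>

definition local_congruence :: "('a::lattice \<times> 'a) set \<Rightarrow> bool" where
  "local_congruence \<rho> \<longleftrightarrow>
     equiv UNIV \<rho> \<and>
     (\<forall>C \<in> UNIV // \<rho>.
        (\<forall>a\<in>C. \<forall>b\<in>C. inf a b \<in> C \<and> sup a b \<in> C) \<and>
        (\<forall>a\<in>C. \<forall>b\<in>C. \<forall>w. a \<le> w \<and> w \<le> b \<longrightarrow> w \<in> C))"

definition LCon :: "('a::lattice \<times> 'a) set set" where
  "LCon = {\<rho>. local_congruence \<rho>}"

definition LCon_order :: "('a::lattice \<times> 'a) set gorder" where
  "LCon_order = \<lparr>carrier = LCon, eq = (=), le = (\<subseteq>)\<rparr>"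

end

theory Submission
  imports Defs
begin

(* The classes of an intersection of relations are the intersections of their classes, and
  equivalences as well as convex sublattices are closed under intersection.  Hence local
  congruences form a Moore family: LCon is closed under arbitrary intersections, the empty one
  being the total relation, and so it is a complete lattice whose meets are intersections.
  The identity is least because every equivalence on the whole lattice is reflexive. *)

definition convex_sublattice :: "'a::lattice set \<Rightarrow> bool" where
  "convex_sublattice C \<longleftrightarrow>
     (\<forall>a\<in>C. \<forall>b\<in>C. inf a b \<in> C \<and> sup a b \<in> C) \<and>
     (\<forall>a\<in>C. \<forall>b\<in>C. \<forall>w. a \<le> w \<and> w \<le> b \<longrightarrow> w \<in> C)"

lemma convex_sublattice_Inter:
  "(\<And>C. C \<in> \<C> \<Longrightarrow> convex_sublattice C) \<Longrightarrow> convex_sublattice (\<Inter>\<C>)"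
  unfolding convex_sublattice_def by blast

lemma local_congruence_iff_classes:
  "local_congruence \<rho> \<longleftrightarrow> equiv UNIV \<rho> \<and> (\<forall>x. convex_sublattice (\<rho> `` {x}))"
  unfolding local_congruence_def convex_sublattice_def quotient_def by simp

lemma equiv_UNIV_Inter:
  assumes "\<And>r. r \<in> A \<Longrightarrow> equiv UNIV r"
  shows "equiv UNIV (\<Inter>A)"
proof (rule equivI)
  show "refl (\<Inter>A)"
    using assms by (auto simp: equiv_def refl_on_def)
  show "sym (\<Inter>A)"
    using assms sym_INTER[of A id] by (simp add: equiv_def)
  show "trans (\<Inter>A)"
    using assms trans_INTER[of A id] by (simp add: equiv_def)
qed simp

lemma Image_Inter_singleton: "(\<Inter>A) `` {x} = (\<Inter>r\<in>A. r `` {x})"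
  by auto

lemma local_congruence_Inter:
  assumes "\<And>\<rho>. \<rho> \<in> A \<Longrightarrow> local_congruence \<rho>"
  shows "local_congruence (\<Inter>A)"
proof -
  have "equiv UNIV (\<Inter>A)"
    using assms by (simp add: local_congruence_iff_classes equiv_UNIV_Inter)
  moreover have "convex_sublattice ((\<Inter>A) `` {x})" for x
    unfolding Image_Inter_singleton
    using assms by (auto simp: local_congruence_iff_classes intro!: convex_sublattice_Inter)
  ultimately show ?thesis
    by (simp add: local_congruence_iff_classes)
qed

lemma convex_sublattice_singleton: "convex_sublattice {x}"
  by (auto simp: convex_sublattice_def intro: order.antisym)

lemma local_congruence_Id: "local_congruence Id"
  by (simp add: local_congruence_iff_classes convex_sublattice_singleton
      equiv_def refl_on_def sym_def trans_def)

lemma carrier_LCon_order [simp]: "carrier LCon_order = LCon"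
  by (simp add: LCon_order_def)

lemma partial_order_LCon_order: "partial_order LCon_order"
  by unfold_locales (auto simp: LCon_order_def)

lemma is_glb_LCon_order_Inter:
  assumes "A \<subseteq> LCon"
  shows "is_glb LCon_order (\<Inter>A) A"
  using assms local_congruence_Inter[of A]
  by (auto simp: greatest_def Lower_def LCon_order_def LCon_def)

lemma least_LCon_order_Id: "least LCon_order Id LCon"
  using local_congruence_Id
  by (auto simp: least_def LCon_order_def LCon_def local_congruence_iff_classes equiv_def refl_on_def)

theorem theorem5p2:
  shows "complete_lattice (LCon_order :: ('a::lattice \<times> 'a) set gorder)
    \<and> least (LCon_order :: ('a \<times> 'a) set gorder) {(a, a) | a::'a. True} LCon
    \<and> greatest (LCon_order :: ('a \<times> 'a) set gorder) {(a, b) | (a::'a) (b::'a). True} LCon"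
proof -
  let ?L = "LCon_order :: ('a \<times> 'a) set gorder"
  have top: "greatest ?L UNIV LCon"
    using is_glb_LCon_order_Inter[of "{}"] by simp
  have "complete_lattice ?L"
  proof (rule partial_order.complete_lattice_criterion1[OF partial_order_LCon_order])
    show "\<exists>g. greatest ?L g (carrier ?L)"
      using top by auto
    show "\<exists>i. is_glb ?L i A" if "A \<subseteq> carrier ?L" for A
      using that is_glb_LCon_order_Inter by auto
  qed
  moreover have "{(a, a) | a::'a. True} = Id" and "{(a, b) | (a::'a) (b::'a). True} = UNIV"
    by auto
  ultimately show ?thesis
    using least_LCon_order_Id top by simp
qed

end
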